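(* Let $A$ be a partially ordered set and $G,H$ games over $A$. If $G=\{G^L\mid G^R\}$ is composite, then $H\lhd G$ if and only if $G\equiv\{H,G^L\mid G^R\}$ (the game obtained from $G$ by adding $H$ as an additional left option). Dually, if $H=\{H^L\mid H^R\}$ is composite, then $H\lhd G$ if and only if $H\equiv\{H^L\mid H^R,G\}$ (the game obtained from $H$ by adding $G$ as an additional right option).
   Context: Games over a poset $A$ are defined inductively: for each $a\in A$ there is an atomic game $[a]$, which has no options; and if $L$ and $R$ are non-empty sets of games, then $\{L\mid R\}$ is a composite game with left options $L$ and right options $R$; we write $\{G^L\mid G^R\}$ for a game with typical left option $G^L$ and right option $G^R$. The relations $\le$ and $\lhd$ are defined by simultaneous recursion: $G\le H$ iff (1) every left option $G^L$ of $G$ satisfies $G^L\lhd H$, (2) every right option $H^R$ of $H$ satisfies $G\lhd H^R$, and (3) if $G$ or $H$ is atomic then $G\lhd H$; and $G\lhd H$ iff (1) some right option $G^R$ of $G$ satisfies $G^R\le H$, or (2) some left option $H^L$ of $H$ satisfies $G\le H^L$, or (3) $G=[a]$, $H=[b]$ are atomic and $a\le b$. $G\equiv H$ means $G\le H$ and $H\le G$. *)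

theory Defs
  imports Main
begin

text \<open>A composite game has a family of left options and a family
of right options; to allow option sets of arbitrary size (a HOL datatype cannot nest through
the unbounded set type), options are given by partial families indexed by an arbitrary type 'i:
the left options of Comp l r are the games g with l i = Some g for some i.  Since 'i is an
arbitrary type variable, every game (of any cardinality) is representable for suitable 'i.\<close>

datatype ('a, 'i) game =
    is_atom: Atom 'a
  | Comp "'i \<Rightarrow> ('a, 'i) game option" "'i \<Rightarrow> ('a, 'i) game option"

fun lopts :: "('a, 'i) game \<Rightarrow> ('a, 'i) game set" where
  "lopts (Atom a) = {}"
| "lopts (Comp l r) = {g. \<exists>i. l i = Some g}"

fun ropts :: "('a, 'i) game \<Rightarrow> ('a, 'i) game set" where
  "ropts (Atom a) = {}"
| "ropts (Comp l r) = {g. \<exists>i. r i = Some g}"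

inductive wf_game :: "('a, 'i) game \<Rightarrow> bool" where
  "wf_game (Atom a)"
| "\<lbrakk> lopts (Comp l r) \<noteq> {}; ropts (Comp l r) \<noteq> {};
     \<forall>x \<in> lopts (Comp l r) \<union> ropts (Comp l r). wf_game x \<rbrakk> \<Longrightarrow> wf_game (Comp l r)"

text \<open>The relations \<le> and \<lhd>, defined by simultaneous recursion.  The recursion is well
founded, so the least solution of the defining clauses is the unique one.\<close>
inductive game_le :: "('a::order, 'i) game \<Rightarrow> ('a, 'i) game \<Rightarrow> bool"
      and game_lf :: "('a::order, 'i) game \<Rightarrow> ('a, 'i) game \<Rightarrow> bool" where
  le_intro: "\<lbrakk> \<forall>gl \<in> lopts G. game_lf gl H;
               \<forall>hr \<in> ropts H. game_lf G hr;
               (is_atom G \<or> is_atom H) \<longrightarrow> game_lf G H \<rbrakk> \<Longrightarrow> game_le G H"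
| lf_right: "\<lbrakk> gr \<in> ropts G; game_le gr H \<rbrakk> \<Longrightarrow> game_lf G H"
| lf_left: "\<lbrakk> hl \<in> lopts H; game_le G hl \<rbrakk> \<Longrightarrow> game_lf G H"
| lf_atom: "a \<le> b \<Longrightarrow> game_lf (Atom a) (Atom b)"

definition game_equiv :: "('a::order, 'i) game \<Rightarrow> ('a, 'i) game \<Rightarrow> bool" where
  "game_equiv G H \<longleftrightarrow> game_le G H \<and> game_le H G"

end

theory Submission imports Defs begin

(* Between composite games, \<le> is decided by the options alone, and reflexivity of \<le> gives
   G\<^sup>L \<lhd> G \<lhd> G\<^sup>R for every option.  So adding H as a left option of G can only make
   the game larger, and the enlarged game is still \<le> G exactly when the new option satisfies
   H \<lhd> G, the one condition not already met by G itself. *)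

lemma game_le_refl: "game_le (G :: ('a::order, 'i) game) G"
proof (induction G)
  case (Atom a)
  show ?case by (rule le_intro) (auto intro: lf_atom)
next
  case (Comp l r)
  have opt_refl: "game_le g g" if "g \<in> lopts (Comp l r) \<union> ropts (Comp l r)" for g
    using that Comp.IH by auto (metis option.set_intros rangeI)+
  show ?case
  proof (intro le_intro ballI impI)
    show "game_lf gl (Comp l r)" if "gl \<in> lopts (Comp l r)" for gl
      using that opt_refl by (blast intro: lf_left)
    show "game_lf (Comp l r) hr" if "hr \<in> ropts (Comp l r)" for hr
      using that opt_refl by (blast intro: lf_right)
  qed simp
qed

lemma lopt_lf: "gl \<in> lopts G \<Longrightarrow> game_lf gl G"
  using lf_left game_le_refl by blast

lemma ropt_lf: "gr \<in> ropts G \<Longrightarrow> game_lf G gr"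
  using lf_right game_le_refl by blast

lemma game_le_composite_iff:
  assumes "\<not> is_atom G" and "\<not> is_atom H"
  shows "game_le G H \<longleftrightarrow> (\<forall>gl \<in> lopts G. game_lf gl H) \<and> (\<forall>hr \<in> ropts H. game_lf G hr)"
  using assms by (auto intro: le_intro elim: game_le.cases)

lemma game_le_options_mono:
  assumes "\<not> is_atom G" and "\<not> is_atom H"
    and "lopts G \<subseteq> lopts H" and "ropts H \<subseteq> ropts G"
  shows "game_le G H"
  using assms by (auto simp: game_le_composite_iff intro: lopt_lf ropt_lf)

lemma game_equiv_insert_lopt_iff:
  assumes "\<not> is_atom G" and "\<not> is_atom K"
    and "lopts K = insert H (lopts G)" and "ropts K = ropts G"
  shows "game_lf H G \<longleftrightarrow> game_equiv G K"
proof -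
  have "game_le G K"
    using assms by (intro game_le_options_mono) auto
  moreover have "game_le K G \<longleftrightarrow> game_lf H G"
    using assms by (auto simp: game_le_composite_iff intro: lopt_lf ropt_lf)
  ultimately show ?thesis
    by (simp add: game_equiv_def)
qed

lemma game_equiv_insert_ropt_iff:
  assumes "\<not> is_atom H" and "\<not> is_atom K"
    and "lopts K = lopts H" and "ropts K = insert G (ropts H)"
  shows "game_lf H G \<longleftrightarrow> game_equiv H K"
proof -
  have "game_le K H"
    using assms by (intro game_le_options_mono) auto
  moreover have "game_le H K \<longleftrightarrow> game_lf H G"
    using assms by (auto simp: game_le_composite_iff intro: lopt_lf ropt_lf)
  ultimately show ?thesis
    by (simp add: game_equiv_def)
qed

theorem lemma4p10:
  fixes G H :: "('a::order, 'i) game"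
  assumes "wf_game G" and "wf_game H"
  shows "(\<not> is_atom G \<longrightarrow>
            (\<forall>K. \<not> is_atom K \<and> lopts K = insert H (lopts G) \<and> ropts K = ropts G \<longrightarrow>
                 (game_lf H G \<longleftrightarrow> game_equiv G K)))
       \<and> (\<not> is_atom H \<longrightarrow>
            (\<forall>K. \<not> is_atom K \<and> lopts K = lopts H \<and> ropts K = insert G (ropts H) \<longrightarrow>
                 (game_lf H G \<longleftrightarrow> game_equiv H K)))"
  using game_equiv_insert_lopt_iff game_equiv_insert_ropt_iff by blast

end
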